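(* For every positive integer $k$, the cycle $C_{6k}$ is edge-critical for $3$ colours; hence $\{C_{6k}: k\in\mathbb{N}\}$ is an infinite family of edge-critical graphs for $3$ colours.
   Context: An undirected graph is identified with the directed graph having both arcs for each edge; $N^-(v)$ is the set of neighbours of $v$. For $q\ge2$ let $[q]=\{0,\dots,q-1\}$. A $D$-function over $[q]$ is a map $f=(f_v)_{v\in V}:[q]^V\to[q]^V$ with each $f_v(x)$ depending only on $(x_u)_{u\in N^-(v)}$. $D$ is $q$-solvable if some $D$-function $f$ over $[q]$ has the property that for every $x\in[q]^V$ there is $v$ with $f_v(x)=x_v$. An undirected graph $G$ is edge-critical for $q$ colours if $G$ is $q$-solvable but $G-e$ (same vertex set, edge $e$ removed) is not $q$-solvable for every edge $e$ of $G$. *)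

theory Defs
  imports "HOL-Library.FuncSet"
begin

text \<open>An undirected graph is given by a vertex set V and a symmetric adjacency
  relation E (an edge uv is identified with both arcs (u,v),(v,u)).\<close>

definition in_nbrs :: "'v set \<Rightarrow> ('v \<Rightarrow> 'v \<Rightarrow> bool) \<Rightarrow> 'v \<Rightarrow> 'v set" where
  "in_nbrs V E v = {u \<in> V. E u v}"

definition configs :: "nat \<Rightarrow> 'v set \<Rightarrow> ('v \<Rightarrow> nat) set" where
  "configs q V = V \<rightarrow>\<^sub>E {0..<q}"

definition is_D_function :: "nat \<Rightarrow> 'v set \<Rightarrow> ('v \<Rightarrow> 'v \<Rightarrow> bool)
    \<Rightarrow> ('v \<Rightarrow> ('v \<Rightarrow> nat) \<Rightarrow> nat) \<Rightarrow> bool" where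
  "is_D_function q V E f \<longleftrightarrow>
     (\<forall>v\<in>V. \<forall>x\<in>configs q V. f v x \<in> {0..<q}) \<and>
     (\<forall>v\<in>V. \<forall>x\<in>configs q V. \<forall>y\<in>configs q V.
        (\<forall>u\<in>in_nbrs V E v. x u = y u) \<longrightarrow> f v x = f v y)"

definition q_solvable :: "nat \<Rightarrow> 'v set \<Rightarrow> ('v \<Rightarrow> 'v \<Rightarrow> bool) \<Rightarrow> bool" where
  "q_solvable q V E \<longleftrightarrow>
     (\<exists>f. is_D_function q V E f \<and>
          (\<forall>x\<in>configs q V. \<exists>v\<in>V. f v x = x v))"

definition remove_edge :: "('v \<Rightarrow> 'v \<Rightarrow> bool) \<Rightarrow> 'v \<Rightarrow> 'v \<Rightarrow> ('v \<Rightarrow> 'v \<Rightarrow> bool)" where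
  "remove_edge E a b = (\<lambda>x y. E x y \<and> {x, y} \<noteq> {a, b})"

definition edge_critical :: "nat \<Rightarrow> 'v set \<Rightarrow> ('v \<Rightarrow> 'v \<Rightarrow> bool) \<Rightarrow> bool" where
  "edge_critical q V E \<longleftrightarrow>
     q_solvable q V E \<and>
     (\<forall>a\<in>V. \<forall>b\<in>V. E a b \<longrightarrow> \<not> q_solvable q V (remove_edge E a b))"

definition cycle_V :: "nat \<Rightarrow> nat set" where
  "cycle_V n = {0..<n}"

definition cycle_E :: "nat \<Rightarrow> nat \<Rightarrow> nat \<Rightarrow> bool" where
  "cycle_E n i j \<longleftrightarrow> i < n \<and> j < n \<and> (j = (i + 1) mod n \<or> i = (j + 1) mod n)"

end

theory Submission
  imports Defs
begin

text \<open>A cycle minus an edge is a path, and no path is 3-solvable: walking along the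
  path, for every colour c of the next vertex all but at most one colour of the current
  vertex extend to a configuration in which every vertex so far guesses wrong. Indeed the
  current vertex sees only its two neighbours, so with c fixed its guess is a function of
  the previous colour, and with three colours some admissible previous colour also avoids
  making that guess right.

  Conversely the cycle of length n = 3m is 3-solvable by a strategy that is 3-periodic
  apart from the first three vertices. If every vertex guessed wrong, the pair of colours
  ending each block of three vertices would lie in a finite relation determined by the
  colours of the vertices n - 1 and 0; this relation is preserved from block to block but
  never contains the starting pair, which contradicts closing up the cycle.\<close>

lemma restrict_in_configs:
  assumes "\<And>v. v \<in> V \<Longrightarrow> g v < q"
  shows "restrict g V \<in> configs q V"
  using assms unfolding configs_def by auto

lemma configs_value_less:
  assumes "y \<in> configs q V" and "v \<in> V"
  shows "y v < q"
  using assms unfolding configs_def by auto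

lemma is_D_functionI:
  assumes "\<And>v x. v \<in> V \<Longrightarrow> x \<in> configs q V \<Longrightarrow> f v x < q"
    and "\<And>v x y. v \<in> V \<Longrightarrow> x \<in> configs q V \<Longrightarrow> y \<in> configs q V \<Longrightarrow>
           (\<And>u. u \<in> in_nbrs V E v \<Longrightarrow> x u = y u) \<Longrightarrow> f v x = f v y"
  shows "is_D_function q V E f"
  unfolding is_D_function_def using assms by (meson atLeastLessThan_iff zero_le)

lemma D_function_less:
  assumes "is_D_function q V E f" and "v \<in> V" and "x \<in> configs q V"
  shows "f v x < q"
  using assms unfolding is_D_function_def by (meson atLeastLessThan_iff)

lemma D_function_cong:
  assumes "is_D_function q V E f" and "v \<in> V" and "x \<in> configs q V" and "y \<in> configs q V"
    and "\<And>u. u \<in> in_nbrs V E v \<Longrightarrow> x u = y u"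
  shows "f v x = f v y"
  using assms unfolding is_D_function_def by blast

lemma q_solvable_transfer:
  assumes bij: "bij_betw p V W"
    and edges: "\<And>u v. u \<in> V \<Longrightarrow> v \<in> V \<Longrightarrow> E' (p u) (p v) \<Longrightarrow> E u v"
    and solvable: "q_solvable q W E'"
  shows "q_solvable q V E"
proof -
  obtain f where f: "is_D_function q W E' f"
    and wins: "\<forall>x\<in>configs q W. \<exists>w\<in>W. f w x = x w"
    using solvable unfolding q_solvable_def by blast
  define p' where "p' = inv_into V p"
  have p'_in: "p' w \<in> V" and p_p': "p (p' w) = w" if "w \<in> W" for w
    using that bij unfolding p'_def by (auto simp: bij_betw_def inv_into_into f_inv_into_f)
  define T where "T x = restrict (x \<circ> p') W" for x :: "'a \<Rightarrow> nat"
  have T_configs: "T x \<in> configs q W" if "x \<in> configs q V" for x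
    using that p'_in unfolding T_def configs_def by auto
  define g where "g v x = f (p v) (T x)" for v x
  have p_in: "p v \<in> W" if "v \<in> V" for v
    using that bij by (auto simp: bij_betw_def)
  have "is_D_function q V E g"
  proof (rule is_D_functionI)
    fix v x assume "v \<in> V" "x \<in> configs q V"
    then show "g v x < q" unfolding g_def by (intro D_function_less[OF f] p_in T_configs)
  next
    fix v x y assume v: "v \<in> V" and x: "x \<in> configs q V" and y: "y \<in> configs q V"
      and agree: "\<And>u. u \<in> in_nbrs V E v \<Longrightarrow> x u = y u"
    show "g v x = g v y"
      unfolding g_def
    proof (rule D_function_cong[OF f p_in[OF v] T_configs[OF x] T_configs[OF y]])
      fix w assume w: "w \<in> in_nbrs W E' (p v)"
      then have "w \<in> W" "E' (p (p' w)) (p v)" using p_p' unfolding in_nbrs_def by auto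
      then have "p' w \<in> in_nbrs V E v" using edges p'_in v unfolding in_nbrs_def by blast
      then show "T x w = T y w" using agree \<open>w \<in> W\<close> unfolding T_def by simp
    qed
  qed
  moreover have "\<exists>v\<in>V. g v x = x v" if x: "x \<in> configs q V" for x
  proof -
    obtain w where "w \<in> W" "f w (T x) = T x w" using wins T_configs[OF x] by blast
    then show ?thesis
      using p'_in p_p' unfolding g_def T_def by (intro bexI[of _ "p' w"]) auto
  qed
  ultimately show ?thesis unfolding q_solvable_def by blast
qed

lemma all_but_one_escape:
  fixes q :: nat and e h :: "nat \<Rightarrow> nat"
  assumes "3 \<le> q"
  shows "\<exists>a\<^sub>0. \<forall>a<q. a \<noteq> a\<^sub>0 \<longrightarrow> (\<exists>b<q. b \<noteq> e a \<and> h b \<noteq> a)"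
proof -
  have unique: "a = a'"
    if "\<not> (\<exists>b<q. b \<noteq> e a \<and> h b \<noteq> a)" "\<not> (\<exists>b<q. b \<noteq> e a' \<and> h b \<noteq> a')" for a a'
  proof -
    have "\<exists>b::nat. b < 3 \<and> b \<noteq> e a \<and> b \<noteq> e a'" by presburger
    then obtain b where "b < 3" "b \<noteq> e a" "b \<noteq> e a'" by blast
    moreover from this have "b < q" using assms by linarith
    ultimately show ?thesis using that by auto
  qed
  show ?thesis
  proof (cases "\<exists>a. \<not> (\<exists>b<q. b \<noteq> e a \<and> h b \<noteq> a)")
    case True
    then obtain a\<^sub>0 where "\<not> (\<exists>b<q. b \<noteq> e a\<^sub>0 \<and> h b \<noteq> a\<^sub>0)" by blast
    then show ?thesis using unique by blast
  qed blast
qed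

definition path_E :: "nat \<Rightarrow> nat \<Rightarrow> nat \<Rightarrow> bool" where
  "path_E m i j \<longleftrightarrow> i < m \<and> j < m \<and> (j = i + 1 \<or> i = j + 1)"

locale path_guessing =
  fixes q m :: nat and f :: "nat \<Rightarrow> (nat \<Rightarrow> nat) \<Rightarrow> nat"
  assumes three_le_q: "3 \<le> q"
    and D_function: "is_D_function q {0..<m} (path_E m) f"
begin

lemma guess_cong:
  assumes "v < m" "x \<in> configs q {0..<m}" "y \<in> configs q {0..<m}"
    and "\<And>u. u < m \<Longrightarrow> u + 1 = v \<or> u = v + 1 \<Longrightarrow> x u = y u"
  shows "f v x = f v y"
proof (rule D_function_cong[OF D_function])
  fix u assume "u \<in> in_nbrs {0..<m} (path_E m) v"
  then show "x u = y u" using assms(4) unfolding in_nbrs_def path_E_def by auto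
qed (use assms(1-3) in auto)

definition wrong_prefix :: "nat \<Rightarrow> nat \<Rightarrow> nat \<Rightarrow> bool" where
  "wrong_prefix i a c \<longleftrightarrow> (\<exists>y\<in>configs q {0..<m}.
     y i = a \<and> (i + 1 < m \<longrightarrow> y (i + 1) = c) \<and> (\<forall>j\<le>i. f j y \<noteq> y j))"

lemma wrong_prefix_first:
  assumes "0 < m" "c < q"
  shows "\<exists>e. \<forall>a<q. a \<noteq> e \<longrightarrow> wrong_prefix 0 a c"
proof -
  define y where "y a = restrict ((\<lambda>_. 0)(0 := a, 1 := c)) {0..<m}" for a
  have y_configs: "y a \<in> configs q {0..<m}" if "a < q" for a
    unfolding y_def using that assms three_le_q by (intro restrict_in_configs) auto
  have "wrong_prefix 0 a c" if "a < q" "a \<noteq> f 0 (y 0)" for a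
  proof -
    have "f 0 (y a) = f 0 (y 0)"
      using assms three_le_q y_configs that(1) by (intro guess_cong) (auto simp: y_def)
    then show ?thesis
      unfolding wrong_prefix_def using assms that y_configs
      by (intro bexI[of _ "y a"]) (auto simp: y_def)
  qed
  then show ?thesis by blast
qed

lemma wrong_prefix_step:
  assumes "i + 1 < m" "c < q"
    and previous: "\<And>a. a < q \<Longrightarrow> \<exists>e. \<forall>b<q. b \<noteq> e \<longrightarrow> wrong_prefix i b a"
  shows "\<exists>e. \<forall>a<q. a \<noteq> e \<longrightarrow> wrong_prefix (i + 1) a c"
proof -
  obtain e where e: "\<And>a b. a < q \<Longrightarrow> b < q \<Longrightarrow> b \<noteq> e a \<Longrightarrow> wrong_prefix i b a"
    using previous by metis
  define z where "z b = restrict ((\<lambda>_. 0)(i := b, i + 2 := c)) {0..<m}" for b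
  have z_configs: "z b \<in> configs q {0..<m}" if "b < q" for b
    unfolding z_def using that assms three_le_q by (intro restrict_in_configs) auto
  define h where "h b = f (i + 1) (z b)" for b
  obtain a\<^sub>0 where a\<^sub>0: "\<And>a. a < q \<Longrightarrow> a \<noteq> a\<^sub>0 \<Longrightarrow> \<exists>b<q. b \<noteq> e a \<and> h b \<noteq> a"
    using all_but_one_escape[OF three_le_q] by metis
  have "wrong_prefix (i + 1) a c" if a: "a < q" "a \<noteq> a\<^sub>0" for a
  proof -
    obtain b where b: "b < q" "b \<noteq> e a" "h b \<noteq> a" using a\<^sub>0 a by blast
    obtain y where y: "y \<in> configs q {0..<m}" "y i = b" "y (i + 1) = a" "\<forall>j\<le>i. f j y \<noteq> y j"
      using e[OF a(1) b(1,2)] assms(1) unfolding wrong_prefix_def by auto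
    define y' where "y' = restrict (y(i + 2 := c)) {0..<m}"
    have y'_configs: "y' \<in> configs q {0..<m}"
      unfolding y'_def using y(1) assms(2)
      by (intro restrict_in_configs) (auto intro: configs_value_less)
    have "f j y' = f j y" if "j \<le> i" for j
      using that assms(1) y(1) y'_configs by (intro guess_cong) (auto simp: y'_def)
    moreover have "f (i + 1) y' = h b"
      unfolding h_def using assms(1) y'_configs z_configs[OF b(1)] y(2)
      by (intro guess_cong) (auto simp: y'_def z_def)
    ultimately have "\<forall>j\<le>i + 1. f j y' \<noteq> y' j"
      using y(3,4) b(3) assms(1) by (auto simp: y'_def le_Suc_eq)
    then show ?thesis
      unfolding wrong_prefix_def using y'_configs y(3) assms(1)
      by (intro bexI[of _ y']) (auto simp: y'_def)
  qed
  then show ?thesis by blast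
qed

lemma wrong_prefix_all_but_one:
  "i < m \<Longrightarrow> c < q \<Longrightarrow> \<exists>e. \<forall>a<q. a \<noteq> e \<longrightarrow> wrong_prefix i a c"
proof (induction i arbitrary: c)
  case 0
  then show ?case using wrong_prefix_first by blast
next
  case (Suc i)
  then show ?case using wrong_prefix_step[of i c] by simp
qed

lemma exists_all_wrong: "\<exists>y\<in>configs q {0..<m}. \<forall>v<m. f v y \<noteq> y v"
proof (cases "m = 0")
  case True
  have "restrict (\<lambda>_. 0) {0..<m} \<in> configs q {0..<m}"
    by (intro restrict_in_configs) (simp add: True)
  then show ?thesis by (auto simp: True)
next
  case False
  then obtain e where e: "\<forall>a<q. a \<noteq> e \<longrightarrow> wrong_prefix (m - 1) a 0"
    using wrong_prefix_all_but_one[of "m - 1" 0] three_le_q by auto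
  have "wrong_prefix (m - 1) (if e = 0 then 1 else 0) 0"
    using e three_le_q by auto
  then obtain y where "y \<in> configs q {0..<m}" "\<forall>j\<le>m - 1. f j y \<noteq> y j"
    unfolding wrong_prefix_def by blast
  moreover have "v \<le> m - 1" if "v < m" for v using that by simp
  ultimately show ?thesis by blast
qed

end

lemma path_not_q_solvable:
  assumes "3 \<le> q"
  shows "\<not> q_solvable q {0..<m} (path_E m)"
  using path_guessing.exists_all_wrong[of q m] assms
  unfolding q_solvable_def path_guessing_def by fastforce

lemma remove_edge_commute: "remove_edge E a b = remove_edge E b a"
  unfolding remove_edge_def by (simp add: insert_commute)

lemma mod_add_left_cancel_nat:
  fixes s v w n :: nat
  shows "(s + v) mod n = (s + w) mod n \<longleftrightarrow> v mod n = w mod n"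
proof
  assume "(s + v) mod n = (s + w) mod n"
  then show "v mod n = w mod n" by (simp add: mod_eq_iff_dvd_symdiff_nat)
qed (metis mod_add_right_eq)

lemma rotation_succ:
  fixes n s u v :: nat
  assumes "u < n" "v < n" "(s + v) mod n = ((s + u) mod n + 1) mod n"
  shows "v = u + 1 \<or> u + 1 = n \<and> v = 0"
proof -
  have "(s + v) mod n = (s + (u + 1)) mod n" using assms(3) by (simp add: mod_simps)
  then have v: "v mod n = (u + 1) mod n" by (simp only: mod_add_left_cancel_nat)
  show ?thesis
  proof (cases "u + 1 < n")
    case False
    then have "u + 1 = n" using assms(1) by simp
    then show ?thesis using v assms(2) by simp
  qed (use v assms(2) in simp)
qed

lemma cycle_minus_edge_not_q_solvable:
  assumes "3 \<le> q" and "a < n"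
  shows "\<not> q_solvable q {0..<n} (remove_edge (cycle_E n) a ((a + 1) mod n))"
proof
  define p where "p i = (a + 1 + i) mod n" for i
  have "inj_on p {0..<n}"
  proof (rule inj_onI)
    fix u v assume "u \<in> {0..<n}" "v \<in> {0..<n}" "p u = p v"
    then show "u = v" unfolding p_def by (simp only: mod_add_left_cancel_nat) simp
  qed
  moreover have "p ` {0..<n} \<subseteq> {0..<n}" using assms(2) by (auto simp: p_def)
  ultimately have "bij_betw p {0..<n} {0..<n}"
    by (simp add: bij_betw_def endo_inj_surj)
  moreover have "path_E n u v"
    if "u \<in> {0..<n}" "v \<in> {0..<n}"
      and "remove_edge (cycle_E n) a ((a + 1) mod n) (p u) (p v)" for u v
  proof -
    have ends: "p (n - 1) = a" "p 0 = (a + 1) mod n" using assms(2) by (simp_all add: p_def)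
    have "{p u, p v} \<noteq> {a, (a + 1) mod n}"
      "v = u + 1 \<or> u + 1 = n \<and> v = 0 \<or> u = v + 1 \<or> v + 1 = n \<and> u = 0"
      using that rotation_succ[of u n v "a + 1"] rotation_succ[of v n u "a + 1"]
      unfolding remove_edge_def cycle_E_def p_def by auto
    then show ?thesis using that ends unfolding path_E_def by (auto simp: insert_commute)
  qed
  moreover assume "q_solvable q {0..<n} (remove_edge (cycle_E n) a ((a + 1) mod n))"
  ultimately have "q_solvable q {0..<n} (path_E n)" by (rule q_solvable_transfer)
  then show False using path_not_q_solvable assms(1) by blast
qed

text \<open>\<open>guess t l r\<close> is the colour guessed by a vertex of type \<open>t\<close> whose predecessor
  shows \<open>l\<close> and whose successor shows \<open>r\<close>.\<close>

definition guess_table :: "nat list list list" where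
  "guess_table =
    [[[1, 2, 1], [1, 0, 0], [2, 2, 0]],
     [[0, 0, 1], [1, 2, 1], [0, 2, 2]],
     [[2, 2, 1], [0, 1, 1], [0, 2, 0]],
     [[2, 1, 1], [0, 1, 0], [2, 2, 0]],
     [[1, 0, 1], [2, 0, 0], [2, 2, 1]],
     [[0, 2, 0], [0, 1, 1], [2, 2, 1]]]"

definition guess :: "nat \<Rightarrow> nat \<Rightarrow> nat \<Rightarrow> nat" where
  "guess t l r = guess_table ! t ! l ! r"

text \<open>Row \<open>3 * s + t\<close> contains every pair \<open>(x (v + 2), x (v + 3))\<close> that can end a block
  \<open>v, v + 1, v + 2\<close> when \<open>x (n - 1) = s\<close>, \<open>x 0 = t\<close> and all vertices up to \<open>v + 2\<close>
  guess wrong.\<close>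

definition block_table :: "(nat \<times> nat) list list" where
  "block_table =
    [[(0,1), (0,2), (1,0), (1,1), (1,2), (2,0), (2,1), (2,2)],
     [(1,0), (2,2)],
     [(0,1), (1,0), (1,1), (2,2)],
     [(0,1), (2,2)],
     [(0,1), (0,2), (1,0), (2,0), (2,2)],
     [(0,1), (0,2), (1,0), (1,1), (2,0), (2,1), (2,2)],
     [(0,1), (0,2), (1,0), (1,1), (2,2)],
     [(0,0), (0,1), (0,2), (1,0), (1,1), (1,2), (2,0), (2,2)],
     [(0,1), (1,0)]]"

definition block_inv :: "nat \<Rightarrow> nat \<Rightarrow> nat \<Rightarrow> nat \<Rightarrow> bool" where
  "block_inv s t a b \<longleftrightarrow> (a, b) \<in> set (block_table ! (3 * s + t))"

lemma less_3_iff: "(x::nat) < 3 \<longleftrightarrow> x = 0 \<or> x = 1 \<or> x = 2"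
  by auto

lemma less_6_iff: "(x::nat) < 6 \<longleftrightarrow> x = 0 \<or> x = 1 \<or> x = 2 \<or> x = 3 \<or> x = 4 \<or> x = 5"
  by auto

lemma guess_less: "t < 6 \<Longrightarrow> l < 3 \<Longrightarrow> r < 3 \<Longrightarrow> guess t l r < 3"
  unfolding less_3_iff less_6_iff by (elim disjE; simp add: guess_def guess_table_def)

lemma block_inv_first:
  "a < 3 \<Longrightarrow> b < 3 \<Longrightarrow> c < 3 \<Longrightarrow> d < 3 \<Longrightarrow> e < 3 \<Longrightarrow>
   guess 0 a c \<noteq> b \<Longrightarrow> guess 1 b d \<noteq> c \<Longrightarrow> guess 2 c e \<noteq> d \<Longrightarrow> block_inv a b d e"
  unfolding less_3_iff
  by (elim disjE; simp add: guess_def guess_table_def block_inv_def block_table_def)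

lemma block_inv_step:
  "s < 3 \<Longrightarrow> t < 3 \<Longrightarrow> a < 3 \<Longrightarrow> b < 3 \<Longrightarrow> c < 3 \<Longrightarrow> d < 3 \<Longrightarrow> e < 3 \<Longrightarrow>
   block_inv s t a b \<Longrightarrow> guess 3 a c \<noteq> b \<Longrightarrow> guess 4 b d \<noteq> c \<Longrightarrow> guess 5 c e \<noteq> d \<Longrightarrow>
   block_inv s t d e"
  unfolding less_3_iff
  by (elim disjE; simp add: guess_def guess_table_def block_inv_def block_table_def)

lemma block_inv_irrefl: "s < 3 \<Longrightarrow> t < 3 \<Longrightarrow> \<not> block_inv s t s t"
  unfolding less_3_iff by (elim disjE; simp add: block_inv_def block_table_def)

definition cycle_pred :: "nat \<Rightarrow> nat \<Rightarrow> nat" where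
  "cycle_pred n v = (v + n - 1) mod n"

definition cycle_succ :: "nat \<Rightarrow> nat \<Rightarrow> nat" where
  "cycle_succ n v = (v + 1) mod n"

lemma cycle_pred_0: "0 < n \<Longrightarrow> cycle_pred n 0 = n - 1"
  by (simp add: cycle_pred_def)

lemma cycle_pred_Suc: "v < n \<Longrightarrow> cycle_pred n (Suc v) = v"
  by (simp add: cycle_pred_def)

lemma cycle_succ_eq: "v + 1 < n \<Longrightarrow> cycle_succ n v = v + 1"
  by (simp add: cycle_succ_def)

lemma cycle_pred_less: "0 < n \<Longrightarrow> cycle_pred n v < n"
  by (simp add: cycle_pred_def)

lemma cycle_succ_less: "0 < n \<Longrightarrow> cycle_succ n v < n"
  by (simp add: cycle_succ_def)

lemma cycle_E_pred: "v < n \<Longrightarrow> cycle_E n (cycle_pred n v) v"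
  by (cases v) (auto simp: cycle_E_def cycle_pred_0 cycle_pred_Suc)

lemma cycle_E_succ: "v < n \<Longrightarrow> cycle_E n (cycle_succ n v) v"
  by (simp add: cycle_E_def cycle_succ_def)

definition vertex_type :: "nat \<Rightarrow> nat" where
  "vertex_type v = (if v < 3 then v else 3 + v mod 3)"

definition cycle_strategy :: "nat \<Rightarrow> nat \<Rightarrow> (nat \<Rightarrow> nat) \<Rightarrow> nat" where
  "cycle_strategy n v x = guess (vertex_type v) (x (cycle_pred n v)) (x (cycle_succ n v))"

lemma cycle_strategy_D_function:
  assumes "0 < n"
  shows "is_D_function 3 {0..<n} (cycle_E n) (cycle_strategy n)"
proof (rule is_D_functionI)
  fix v x assume "x \<in> configs 3 {0..<n}"
  moreover have "vertex_type v < 6" by (simp add: vertex_type_def)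
  ultimately show "cycle_strategy n v x < 3"
    unfolding cycle_strategy_def
    using assms by (simp add: guess_less configs_value_less cycle_pred_less cycle_succ_less)
next
  fix v and x y :: "nat \<Rightarrow> nat"
  assume "v \<in> {0..<n}" and agree: "\<And>u. u \<in> in_nbrs {0..<n} (cycle_E n) v \<Longrightarrow> x u = y u"
  then have "x (cycle_pred n v) = y (cycle_pred n v)" "x (cycle_succ n v) = y (cycle_succ n v)"
    using assms by (simp_all add: in_nbrs_def cycle_E_pred cycle_E_succ cycle_pred_less cycle_succ_less)
  then show "cycle_strategy n v x = cycle_strategy n v y"
    unfolding cycle_strategy_def by simp
qed

locale cycle_all_wrong =
  fixes m :: nat and x :: "nat \<Rightarrow> nat"
  assumes m_pos: "0 < m"
    and x_configs: "x \<in> configs 3 {0..<3 * m}"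
    and all_wrong: "\<And>v. v < 3 * m \<Longrightarrow> cycle_strategy (3 * m) v x \<noteq> x v"
begin

lemma x_less: "v < 3 * m \<Longrightarrow> x v < 3"
  using x_configs by (simp add: configs_value_less)

lemma first_block: "block_inv (x (3 * m - 1)) (x 0) (x 2) (x (3 mod (3 * m)))"
proof (rule block_inv_first)
  have "cycle_pred (3 * m) 1 = 0" "cycle_pred (3 * m) 2 = 1"
    "cycle_succ (3 * m) 2 = 3 mod (3 * m)"
    using m_pos by (simp_all add: cycle_pred_Suc numeral_2_eq_2 cycle_succ_def)
  moreover have "cycle_succ (3 * m) 0 = 1" "cycle_succ (3 * m) 1 = 2"
    using m_pos by (simp_all add: cycle_succ_eq)
  moreover have "vertex_type 0 = 0" "vertex_type 1 = 1" "vertex_type 2 = 2"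
    by (simp_all add: vertex_type_def)
  ultimately show "guess 0 (x (3 * m - 1)) (x 1) \<noteq> x 0" "guess 1 (x 0) (x 2) \<noteq> x 1"
    "guess 2 (x 1) (x (3 mod (3 * m))) \<noteq> x 2"
    using all_wrong[of 0] all_wrong[of 1] all_wrong[of 2] m_pos
    by (simp_all add: cycle_strategy_def cycle_pred_0)
qed (use m_pos in \<open>simp_all add: x_less\<close>)

lemma next_block:
  assumes "3 \<le> v" "v mod 3 = 0" "v + 3 \<le> 3 * m"
    and "block_inv (x (3 * m - 1)) (x 0) (x (v - 1)) (x v)"
  shows "block_inv (x (3 * m - 1)) (x 0) (x (v + 2)) (x ((v + 3) mod (3 * m)))"
proof (rule block_inv_step[OF _ _ _ _ _ _ _ assms(4)])
  have "vertex_type v = 3" "vertex_type (v + 1) = 4" "vertex_type (v + 2) = 5"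
    using assms(1,2) by (simp_all add: vertex_type_def mod_Suc)
  moreover have "cycle_pred (3 * m) v = v - 1" "cycle_pred (3 * m) (v + 1) = v"
    "cycle_pred (3 * m) (v + 2) = v + 1"
    using assms(1,3) cycle_pred_Suc[of "v - 1" "3 * m"] by (simp_all add: cycle_pred_Suc)
  moreover have "cycle_succ (3 * m) v = v + 1" "cycle_succ (3 * m) (v + 1) = v + 2"
    "cycle_succ (3 * m) (v + 2) = (v + 3) mod (3 * m)"
    using assms(3) by (simp_all add: cycle_succ_def numeral_3_eq_3)
  ultimately show "guess 3 (x (v - 1)) (x (v + 1)) \<noteq> x v"
    "guess 4 (x v) (x (v + 2)) \<noteq> x (v + 1)"
    "guess 5 (x (v + 1)) (x ((v + 3) mod (3 * m))) \<noteq> x (v + 2)"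
    using all_wrong[of v] all_wrong[of "v + 1"] all_wrong[of "v + 2"] assms(3)
    by (simp_all add: cycle_strategy_def)
qed (use assms m_pos in \<open>simp_all add: x_less\<close>)

lemma block_invariant:
  "j < m \<Longrightarrow> block_inv (x (3 * m - 1)) (x 0) (x (3 * j + 2)) (x ((3 * j + 3) mod (3 * m)))"
proof (induction j)
  case 0
  show ?case using first_block by (simp only: mult_0_right add_0)
next
  case (Suc j)
  then show ?case using next_block[of "3 * j + 3"] by simp
qed

lemma all_wrong_contradiction: False
proof -
  have "3 * (m - 1) + 2 = 3 * m - 1" "3 * (m - 1) + 3 = 3 * m"
    using m_pos by auto
  then have "block_inv (x (3 * m - 1)) (x 0) (x (3 * m - 1)) (x 0)"
    using block_invariant[of "m - 1"] m_pos by simp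
  then show False using block_inv_irrefl x_less m_pos by simp
qed

end

lemma cycle_strategy_wins:
  assumes "0 < m" and "x \<in> configs 3 {0..<3 * m}"
  shows "\<exists>v\<in>{0..<3 * m}. cycle_strategy (3 * m) v x = x v"
  using cycle_all_wrong.all_wrong_contradiction assms
  unfolding cycle_all_wrong_def by (meson atLeastLessThan_iff zero_le)

lemma cycle_q_solvable:
  assumes "0 < m"
  shows "q_solvable 3 {0..<3 * m} (cycle_E (3 * m))"
  unfolding q_solvable_def
proof (intro exI conjI ballI)
  show "is_D_function 3 {0..<3 * m} (cycle_E (3 * m)) (cycle_strategy (3 * m))"
    using assms by (simp add: cycle_strategy_D_function)
  fix x assume "x \<in> configs 3 {0..<3 * m}"
  then show "\<exists>v\<in>{0..<3 * m}. cycle_strategy (3 * m) v x = x v"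
    using cycle_strategy_wins[OF assms] by blast
qed

lemma cycle_minus_any_edge_not_q_solvable:
  assumes "3 \<le> q" and "cycle_E n a b"
  shows "\<not> q_solvable q {0..<n} (remove_edge (cycle_E n) a b)"
proof -
  from assms(2) consider "a < n" "b = (a + 1) mod n" | "b < n" "a = (b + 1) mod n"
    unfolding cycle_E_def by auto
  then show ?thesis
  proof cases
    case 1
    then show ?thesis using cycle_minus_edge_not_q_solvable[OF assms(1)] by simp
  next
    case 2
    then show ?thesis
      using cycle_minus_edge_not_q_solvable[OF assms(1), of b n] by (simp add: remove_edge_commute)
  qed
qed

lemma cycle_edge_critical:
  assumes "0 < m"
  shows "edge_critical 3 (cycle_V (3 * m)) (cycle_E (3 * m))"
  unfolding edge_critical_def cycle_V_def
  using cycle_q_solvable[OF assms] cycle_minus_any_edge_not_q_solvable by simp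

theorem theorem17:
  fixes k :: nat
  assumes "k \<ge> 1"
  shows "edge_critical 3 (cycle_V (6 * k)) (cycle_E (6 * k))"
  using cycle_edge_critical[of "2 * k"] assms by simp

end
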